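(* Let $\mathcal{S}\subseteq\mathcal{S}^N$ be a closed set such that for every $\bm S\in\mathbb{R}^{N\times N}$ the Frobenius-norm projection $P_{\mathcal{S}}(\bm S):=\arg\min_{\hat{\bm S}\in\mathcal{S}}\Vert\bm S-\hat{\bm S}\Vert_{\rm F}$ is unique. Fix $\bm\Lambda_o\in\mathcal{D}_N$ with non-increasing diagonal entries and let $\mathcal{M}:=\{\bm V\bm\Lambda_o\bm V^T:\bm V\in{\rm O}(N)\}$. Let $\bm S_0\in\mathcal{M}$ and generate a sequence by the alternating projections method $$\bm S_{k+1/2}=P_{\mathcal{S}}(\bm S_k),\qquad \bm S_{k+1}\in P_{\mathcal{M}}(\bm S_{k+1/2}),$$ where for $\bm Y\in\mathcal{S}^N$, $P_{\mathcal{M}}(\bm Y)$ denotes the set of matrices $\bm Q\bm\Lambda_o\bm Q^T$ over all eigendecompositions $\bm Y=\bm Q\bm\Lambda\bm Q^T$ ($\bm Q\in{\rm O}(N)$) with non-increasing diagonal $\bm\Lambda$. Then there exists a limit point $\bm S$ of the sequence $(\bm S_k)$ which is a fixed point of this iteration and satisfies $$\Vert\bm S-P_{\mathcal{S}}(\bm S)\Vert=\lim_{k\to\infty}\Vert\bm S_k-P_{\mathcal{S}}(\bm S_k)\Vert .$$ Moreover, if this limit is zero, then $\bm S\in\mathcal{S}\cap\mathcal{M}$.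
   Context: $\mathcal{S}^N$ denotes the set of real symmetric $N\times N$ matrices, $\mathcal{D}_N$ the set of real $N\times N$ diagonal matrices, ${\rm O}(N)$ the set of $N\times N$ real orthogonal matrices. A diagonal matrix $\bm\Lambda$ has non-increasing diagonal entries if $[\bm\Lambda]_{ii}\ge[\bm\Lambda]_{jj}$ for $i<j$. Fixed point: a matrix $\bm S\in\mathcal{S}^N$ is a fixed point of the alternating projections iteration if there exists an eigendecomposition $P_{\mathcal{S}}(\bm S)=\bm Q\bm\Lambda\bm Q^T$ with $\bm Q\in{\rm O}(N)$ and non-increasing diagonal $\bm\Lambda$ such that $\bm S=\bm Q\bm\Lambda_o\bm Q^T$; equivalently $\bm S\in P_{\mathcal{M}}(P_{\mathcal{S}}(\bm S))$. *)

theory Defs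
  imports "HOL-Analysis.Analysis"
begin

text \<open>N x N real matrices are rendered as real^'n^'n with 'n a finite linearly ordered
index type (the order is needed to speak of non-increasing diagonal entries).
The library norm on real^'n^'n is exactly the Frobenius norm.\<close>

definition symmetric_mat :: "real^'n^'n \<Rightarrow> bool" where
  "symmetric_mat A \<longleftrightarrow> transpose A = A"

definition diagonal_mat :: "real^'n^'n \<Rightarrow> bool" where
  "diagonal_mat D \<longleftrightarrow> (\<forall>i j. i \<noteq> j \<longrightarrow> D $ i $ j = 0)"

definition nonincr_diag :: "real^('n::{finite,linorder})^('n::{finite,linorder}) \<Rightarrow> bool" where
  "nonincr_diag D \<longleftrightarrow> (\<forall>i j. i < j \<longrightarrow> D $ j $ j \<le> D $ i $ i)"

text \<open>Frobenius-norm projection onto a set (meaningful when the minimiser exists and is unique).\<close>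
definition proj_set :: "(real^'n^'n) set \<Rightarrow> real^'n^'n \<Rightarrow> real^'n^'n" where
  "proj_set S X = (THE Y. Y \<in> S \<and> (\<forall>Z\<in>S. norm (X - Y) \<le> norm (X - Z)))"

definition iso_set :: "real^'n^'n \<Rightarrow> (real^'n^'n) set" where
  "iso_set Lo = {V ** Lo ** transpose V | V. orthogonal_matrix V}"

definition proj_M :: "real^('n::{finite,linorder})^('n::{finite,linorder}) \<Rightarrow> real^('n::{finite,linorder})^('n::{finite,linorder}) \<Rightarrow> (real^('n::{finite,linorder})^('n::{finite,linorder})) set" where
  "proj_M Lo Y = {Q ** Lo ** transpose Q | Q. orthogonal_matrix Q \<and>
      (\<exists>L. diagonal_mat L \<and> nonincr_diag L \<and> Y = Q ** L ** transpose Q)}"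

end

theory Submission
  imports Defs
begin

text \<open>The distance \<open>d\<^sub>k\<close> from \<open>S\<^sub>k\<close> to \<open>SS\<close> does not increase along the iteration:
the step to \<open>P\<^sub>S(S\<^sub>k)\<close> is a nearest-point step, and the step to \<open>S\<^sub>k\<^sub>+\<^sub>1\<close> cannot move away
from \<open>P\<^sub>S(S\<^sub>k)\<close>, because by von Neumann's trace inequality the matrix with spectrum \<open>\<Lambda>\<^sub>o\<close>
nearest to \<open>Q \<Lambda> Q\<^sup>T\<close> is \<open>Q \<Lambda>\<^sub>o Q\<^sup>T\<close>. Hence \<open>d\<^sub>k\<close> converges. The eigenvector matrices lie in
the compact orthogonal group and the ordered eigenvalues stay bounded, so a subsequence of the
eigendecompositions converges to some \<open>(Q, \<Lambda>)\<close>. Its limit \<open>T = Q \<Lambda>\<^sub>o Q\<^sup>T\<close> has distance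
\<open>lim d\<^sub>k\<close> both to \<open>SS\<close> (by continuity of the distance) and to the limit \<open>Y = Q \<Lambda> Q\<^sup>T \<in> SS\<close> of
the projections, so \<open>Y = P\<^sub>S(T)\<close> by uniqueness, and \<open>T\<close> is a fixed point.\<close>

lemma inner_matrix_eq_trace: "(X::real^'n^'n) \<bullet> Y = trace (transpose X ** Y)"
  unfolding inner_vec_def trace_def matrix_matrix_mult_def transpose_def
  by (simp add: inner_real_def) (rule sum.swap)

lemma orthogonal_matrix_mult_transpose:
  assumes "orthogonal_matrix Q"
  shows "transpose Q ** Q = mat 1" and "Q ** transpose Q = mat 1"
  using assms by (simp_all add: orthogonal_matrix_def)

lemma inner_orthogonal_conj:
  fixes Q A B :: "real^'n^'n"
  assumes Q: "orthogonal_matrix Q"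
  shows "(Q ** A ** transpose Q) \<bullet> (Q ** B ** transpose Q) = A \<bullet> B"
proof -
  have "transpose (Q ** A ** transpose Q) ** (Q ** B ** transpose Q)
      = Q ** (transpose A ** B) ** transpose Q"
    by (simp add: matrix_transpose_mul matrix_mul_assoc[symmetric] orthogonal_matrix_mult_transpose[OF Q])
      (simp add: matrix_mul_assoc orthogonal_matrix_mult_transpose[OF Q])
  then show ?thesis unfolding inner_matrix_eq_trace
    by (metis trace_mul_sym matrix_mul_assoc orthogonal_matrix_mult_transpose(1)[OF Q] matrix_mul_lid)
qed

lemma norm_orthogonal_conj:
  fixes Q A :: "real^'n^'n"
  assumes "orthogonal_matrix Q"
  shows "norm (Q ** A ** transpose Q) = norm A"
  by (simp add: norm_eq_sqrt_inner inner_orthogonal_conj[OF assms])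

lemma norm_orthogonal_matrix:
  "orthogonal_matrix (Q::real^'n^'n) \<Longrightarrow> norm Q = sqrt (real CARD('n))"
  by (simp add: norm_eq_sqrt_inner inner_matrix_eq_trace orthogonal_matrix_mult_transpose trace_I)

lemma sum_antimono_mult_nonneg:
  fixes a h :: "'n::{finite,linorder} \<Rightarrow> real"
  assumes a: "antimono a" and partial_nonneg: "\<And>k. 0 \<le> (\<Sum>i\<in>{..k}. h i)"
    and total_zero: "(\<Sum>i\<in>UNIV. h i) = 0"
  shows "0 \<le> (\<Sum>i\<in>UNIV. a i * h i)"
proof -
  have partial: "a k * (\<Sum>i\<in>{..k}. h i) \<le> (\<Sum>i\<in>{..k}. a i * h i)" for k
  proof (induction "card {..<k}" arbitrary: k rule: less_induct)
    case less
    show ?case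
    proof (cases "{..<k} = {}")
      case True
      then have "{..k} = {k}" by (auto simp: order.order_iff_strict)
      then show ?thesis by simp
    next
      case False
      define p where "p = Max {..<k}"
      have pk: "p < k" using False Max_in[of "{..<k}"] by (simp add: p_def)
      have eq: "{..k} = insert k {..p}"
        using pk by (auto simp: p_def intro: Max_ge)
      have "{..<p} \<subset> {..<k}" using pk by auto
      then have "card {..<p} < card {..<k}" by (simp add: psubset_card_mono)
      then have IH: "a p * (\<Sum>i\<in>{..p}. h i) \<le> (\<Sum>i\<in>{..p}. a i * h i)" by (rule less)
      have "a k * (\<Sum>i\<in>{..p}. h i) \<le> a p * (\<Sum>i\<in>{..p}. h i)"
        using antimonoD[OF a, of p k] pk partial_nonneg[of p] by (intro mult_right_mono) auto
      moreover have "k \<notin> {..p}" using pk by auto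
      ultimately show ?thesis using IH unfolding eq by (simp add: distrib_left)
    qed
  qed
  have "{..Max (UNIV::'n set)} = UNIV" by auto
  then show ?thesis using partial[of "Max UNIV"] total_zero by simp
qed

lemma doubly_stochastic_rearrangement:
  fixes p :: "'n::{finite,linorder} \<Rightarrow> 'n \<Rightarrow> real" and a b :: "'n \<Rightarrow> real"
  assumes p0: "\<And>i j. 0 \<le> p i j" and row: "\<And>i. (\<Sum>j\<in>UNIV. p i j) = 1"
    and col: "\<And>j. (\<Sum>i\<in>UNIV. p i j) = 1"
    and a: "antimono a" and b: "antimono b"
  shows "(\<Sum>i\<in>UNIV. a i * (\<Sum>j\<in>UNIV. p i j * b j)) \<le> (\<Sum>i\<in>UNIV. a i * b i)"
proof -
  \<comment> \<open>Abel summation: the partial sums of \<open>h\<close> are nonnegative because the column sums of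
    \<open>p\<close> restricted to the first rows lie in \<open>[0, 1]\<close> and \<open>b\<close> is antitone.\<close>
  define h where "h i = b i - (\<Sum>j\<in>UNIV. p i j * b j)" for i
  have partial_nonneg: "0 \<le> (\<Sum>i\<in>{..k}. h i)" for k
  proof -
    define w where "w j = (\<Sum>i\<in>{..k}. p i j)" for j
    have w1: "w j \<le> 1" for j
      unfolding w_def col[of j, symmetric] by (rule sum_mono2) (auto simp: p0)
    have w0: "0 \<le> w j" for j unfolding w_def by (rule sum_nonneg) (simp add: p0)
    have sw: "(\<Sum>j\<in>UNIV. w j) = real (card {..k})"
      unfolding w_def by (subst sum.swap) (simp add: row)
    have e1: "(\<Sum>i\<in>{..k}. b i) = (\<Sum>j\<in>UNIV. of_bool (j \<le> k) * b j)"
      by (simp add: sum.If_cases atMost_def)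
    have e2: "(\<Sum>i\<in>{..k}. \<Sum>j\<in>UNIV. p i j * b j) = (\<Sum>j\<in>UNIV. w j * b j)"
      unfolding w_def by (subst sum.swap) (simp add: sum_distrib_right)
    have "(\<Sum>i\<in>{..k}. h i) = (\<Sum>j\<in>UNIV. (of_bool (j \<le> k) - w j) * b j)"
      unfolding h_def sum_subtractf e1 e2 by (simp add: left_diff_distrib sum_subtractf)
    also have "\<dots> \<ge> (\<Sum>j\<in>UNIV. (of_bool (j \<le> k) - w j) * b k)"
    proof (rule sum_mono)
      fix j
      show "(of_bool (j \<le> k) - w j) * b k \<le> (of_bool (j \<le> k) - w j) * b j"
      proof (cases "j \<le> k")
        case True
        then show ?thesis using w1[of j] antimonoD[OF b, of j k] by (simp add: mult_left_mono)
      next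
        case False
        then have "b j \<le> b k" using antimonoD[OF b, of k j] by auto
        then show ?thesis using False w0[of j] by (simp add: mult_left_mono)
      qed
    qed
    moreover have "(\<Sum>j\<in>UNIV. (of_bool (j \<le> k) - w j) * b k) = 0"
      unfolding sum_distrib_right[symmetric] sum_subtractf sw
      by (simp add: sum.If_cases atMost_def)
    ultimately show ?thesis by linarith
  qed
  have total_zero: "(\<Sum>i\<in>UNIV. h i) = 0"
    unfolding h_def sum_subtractf by (subst sum.swap) (simp add: sum_distrib_right[symmetric] col)
  have "0 \<le> (\<Sum>i\<in>UNIV. a i * h i)" by (rule sum_antimono_mult_nonneg[OF a partial_nonneg total_zero])
  then show ?thesis unfolding h_def by (simp add: right_diff_distrib sum_subtractf)
qed

lemma antimono_nonincr_diag: "nonincr_diag L \<Longrightarrow> antimono (\<lambda>i. L$i$i)"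
  unfolding nonincr_diag_def antimono_def by (metis order.order_iff_strict order.refl)

lemma inner_diagonal_mat:
  fixes X L :: "real^'n^'n"
  assumes "diagonal_mat L"
  shows "X \<bullet> L = (\<Sum>i\<in>UNIV. X$i$i * L$i$i)"
proof -
  have "X$i \<bullet> L$i = X$i$i * L$i$i" for i
  proof -
    have "X$i \<bullet> L$i = (\<Sum>j\<in>UNIV. if j = i then X$i$i * L$i$i else 0)"
      unfolding inner_vec_def inner_real_def
      by (rule sum.cong) (use assms in \<open>auto simp: diagonal_mat_def\<close>)
    then show ?thesis by simp
  qed
  then show ?thesis unfolding inner_vec_def by simp
qed

lemma diagonal_entry_conj_diagonal_mat:
  fixes W Lo :: "real^'n^'n"
  assumes "diagonal_mat Lo"
  shows "(W ** Lo ** transpose W)$i$i = (\<Sum>j\<in>UNIV. (W$i$j)^2 * Lo$j$j)"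
proof -
  have "(W ** Lo)$i$k = W$i$k * Lo$k$k" for k
  proof -
    have "(W ** Lo)$i$k = (\<Sum>m\<in>UNIV. W$i$m * Lo$m$k)" by (simp add: matrix_matrix_mult_def)
    also have "\<dots> = (\<Sum>m\<in>UNIV. if m = k then W$i$k * Lo$k$k else 0)"
      by (rule sum.cong) (use assms in \<open>auto simp: diagonal_mat_def\<close>)
    finally show ?thesis by simp
  qed
  then show ?thesis
    unfolding matrix_matrix_mult_def[of "W ** Lo"] transpose_def
    by (simp add: power2_eq_square mult_ac)
qed

lemma inner_orthogonal_conj_diagonal_le:
  fixes W Lo L :: "real^('n::{finite,linorder})^('n::{finite,linorder})"
  assumes W: "orthogonal_matrix W" and "diagonal_mat Lo" "nonincr_diag Lo"
    "diagonal_mat L" "nonincr_diag L"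
  shows "(W ** Lo ** transpose W) \<bullet> L \<le> Lo \<bullet> L"
proof -
  have row: "(\<Sum>j\<in>UNIV. (W$i$j)^2) = 1" for i
  proof -
    have "(W ** transpose W)$i$i = 1" using W by (simp add: orthogonal_matrix_def mat_def)
    then show ?thesis by (simp add: matrix_matrix_mult_def transpose_def power2_eq_square)
  qed
  have col: "(\<Sum>i\<in>UNIV. (W$i$j)^2) = 1" for j
  proof -
    have "(transpose W ** W)$j$j = 1" using W by (simp add: orthogonal_matrix_def mat_def)
    then show ?thesis by (simp add: matrix_matrix_mult_def transpose_def power2_eq_square)
  qed
  \<comment> \<open>the squared entries of \<open>W\<close> form a doubly stochastic matrix\<close>
  have "(\<Sum>i\<in>UNIV. L$i$i * (\<Sum>j\<in>UNIV. (W$i$j)^2 * Lo$j$j)) \<le> (\<Sum>i\<in>UNIV. L$i$i * Lo$i$i)"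
    using row col antimono_nonincr_diag assms(3,5)
    by (intro doubly_stochastic_rearrangement[where p="\<lambda>i j. (W$i$j)^2"]) auto
  then show ?thesis
    unfolding inner_diagonal_mat[OF assms(4)] diagonal_entry_conj_diagonal_mat[OF assms(2)] by (simp add: mult_ac)
qed

lemma norm_aligned_conj_diff_le:
  fixes Q V Lo L :: "real^('n::{finite,linorder})^('n::{finite,linorder})"
  assumes Q: "orthogonal_matrix Q" and V: "orthogonal_matrix V"
    and "diagonal_mat Lo" "nonincr_diag Lo" "diagonal_mat L" "nonincr_diag L"
  shows "norm (Q ** Lo ** transpose Q - Q ** L ** transpose Q)
     \<le> norm (V ** Lo ** transpose V - Q ** L ** transpose Q)"
proof -
  define W where "W = transpose Q ** V"
  have W: "orthogonal_matrix W" unfolding W_def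
    using Q V by (simp add: orthogonal_matrix_mul)
  have VQ: "V = Q ** W" unfolding W_def
    by (simp add: matrix_mul_assoc orthogonal_matrix_mult_transpose[OF Q])
  define X where "X = W ** Lo ** transpose W"
  have VX: "V ** Lo ** transpose V = Q ** X ** transpose Q"
    unfolding VQ X_def by (simp add: matrix_transpose_mul matrix_mul_assoc)
  have XX: "X \<bullet> X = Lo \<bullet> Lo" unfolding X_def by (rule inner_orthogonal_conj[OF W])
  have XL: "X \<bullet> L \<le> Lo \<bullet> L" unfolding X_def
    by (rule inner_orthogonal_conj_diagonal_le) (use assms W in auto)
  have norm_diff_sq: "norm (A - B)^2 = A \<bullet> A - 2 * (A \<bullet> B) + B \<bullet> B"
    for A B :: "real^('n::{finite,linorder})^('n::{finite,linorder})"
    by (simp add: power2_norm_eq_inner inner_diff_left inner_diff_right inner_commute)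
  \<comment> \<open>both conjugates of \<open>Lo\<close> have the same norm, so only the cross terms differ\<close>
  have "norm (Q ** Lo ** transpose Q - Q ** L ** transpose Q)^2
      \<le> norm (V ** Lo ** transpose V - Q ** L ** transpose Q)^2"
    unfolding VX norm_diff_sq inner_orthogonal_conj[OF Q] using XX XL by simp
  then show ?thesis by (rule power2_le_imp_le) simp
qed

lemma compact_orthogonal_matrices: "compact {Q::real^'n^'n. orthogonal_matrix Q}"
proof (rule bounded_closed_imp_seq_compact[THEN seq_compact_imp_Heine_Borel])
  show "bounded {Q::real^'n^'n. orthogonal_matrix Q}"
    by (rule boundedI[of _ "sqrt (real CARD('n))"]) (simp add: norm_orthogonal_matrix)
  show "closed {Q::real^'n^'n. orthogonal_matrix Q}"
    unfolding orthogonal_matrix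
    by (intro closed_Collect_eq continuous_intros)
      (simp_all add: matrix_matrix_mult_def transpose_def continuous_on_vec_lambda continuous_intros)
qed

lemma closed_nonincr_diagonal_matrices:
  "closed {L::real^('n::{finite,linorder})^('n::{finite,linorder}). diagonal_mat L \<and> nonincr_diag L}"
  unfolding diagonal_mat_def nonincr_diag_def
  by (intro closed_Collect_conj closed_Collect_all closed_Collect_imp closed_Collect_eq
      closed_Collect_le continuous_intros) simp_all

lemma tendsto_matrix_mult [tendsto_intros]:
  fixes A B :: "'a \<Rightarrow> real^'n^'n"
  shows "(A \<longlongrightarrow> a) F \<Longrightarrow> (B \<longlongrightarrow> b) F \<Longrightarrow> ((\<lambda>x. A x ** B x) \<longlongrightarrow> a ** b) F"
  unfolding matrix_matrix_mult_def by (intro tendsto_intros)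

lemma tendsto_transpose [tendsto_intros]:
  fixes A :: "'a \<Rightarrow> real^'n^'n"
  shows "(A \<longlongrightarrow> a) F \<Longrightarrow> ((\<lambda>x. transpose (A x)) \<longlongrightarrow> transpose a) F"
  unfolding transpose_def by (intro tendsto_intros)

lemma convergent_subsequence_orthogonal_diagonal:
  fixes Q L :: "nat \<Rightarrow> real^('n::{finite,linorder})^('n::{finite,linorder})"
  assumes "\<And>k. orthogonal_matrix (Q k)" and "\<And>k. diagonal_mat (L k) \<and> nonincr_diag (L k)"
    and "\<And>k. norm (L k) \<le> c"
  obtains r Q' L' where "strict_mono r" "(Q \<circ> r) \<longlonglongrightarrow> Q'" "(L \<circ> r) \<longlonglongrightarrow> L'"
    "orthogonal_matrix Q'" "diagonal_mat L' \<and> nonincr_diag L'"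
proof -
  define K :: "((real^('n::{finite,linorder})^('n::{finite,linorder})) \<times> (real^('n::{finite,linorder})^('n::{finite,linorder}))) set"
    where "K = {Q. orthogonal_matrix Q}
    \<times> ({L. diagonal_mat L \<and> nonincr_diag L} \<inter> cball 0 c)"
  have "seq_compact K" unfolding K_def compact_eq_seq_compact_metric[symmetric]
    by (rule compact_Times[OF compact_orthogonal_matrices
          closed_Int_compact[OF closed_nonincr_diagonal_matrices compact_cball]])
  moreover have "\<forall>k. (Q k, L k) \<in> K" using assms by (simp add: K_def)
  ultimately obtain l r where l: "l \<in> K" and r: "strict_mono r"
    and lim: "((\<lambda>k. (Q k, L k)) \<circ> r) \<longlonglongrightarrow> l"
    by (rule seq_compactE)
  show ?thesis
  proof (rule that[OF r])
    show "(Q \<circ> r) \<longlonglongrightarrow> fst l" and "(L \<circ> r) \<longlonglongrightarrow> snd l"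
      using tendsto_fst[OF lim] tendsto_snd[OF lim] by (simp_all add: o_def)
    show "orthogonal_matrix (fst l)" and "diagonal_mat (snd l) \<and> nonincr_diag (snd l)"
      using l by (auto simp: K_def)
  qed
qed

lemma proj_set_nearest:
  assumes "\<exists>!Y. Y \<in> A \<and> (\<forall>Z\<in>A. norm (X - Y) \<le> norm (X - Z))"
  shows "proj_set A X \<in> A \<and> (\<forall>Z\<in>A. norm (X - proj_set A X) \<le> norm (X - Z))"
  unfolding proj_set_def by (rule theI'[OF assms])

lemma proj_set_eqI:
  assumes unique: "\<exists>!Y. Y \<in> A \<and> (\<forall>Z\<in>A. norm (X - Y) \<le> norm (X - Z))"
    and "Y \<in> A" and "norm (X - Y) \<le> norm (X - proj_set A X)"
  shows "Y = proj_set A X"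
proof -
  have "Y \<in> A \<and> (\<forall>Z\<in>A. norm (X - Y) \<le> norm (X - Z))"
    using assms(2,3) proj_set_nearest[OF unique] by (auto intro: order.trans)
  with proj_set_nearest[OF unique] unique show ?thesis by blast
qed

lemma norm_diff_proj_set_eq_infdist:
  assumes unique: "\<exists>!Y. Y \<in> A \<and> (\<forall>Z\<in>A. norm (X - Y) \<le> norm (X - Z))"
  shows "norm (X - proj_set A X) = infdist X A"
proof (rule antisym)
  have nearest: "proj_set A X \<in> A" "\<And>Z. Z \<in> A \<Longrightarrow> norm (X - proj_set A X) \<le> norm (X - Z)"
    using proj_set_nearest[OF unique] by auto
  then have "A \<noteq> {}" by blast
  then show "norm (X - proj_set A X) \<le> infdist X A"
    unfolding infdist_notempty[OF \<open>A \<noteq> {}\<close>] dist_norm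
    by (rule cINF_greatest) (rule nearest(2))
  show "infdist X A \<le> norm (X - proj_set A X)"
    using infdist_le[OF nearest(1)] by (simp add: dist_norm)
qed

lemma proj_M_subset_iso_set: "proj_M Lo Y \<subseteq> iso_set Lo"
  unfolding proj_M_def iso_set_def by blast

locale alternating_projections =
  fixes SS :: "(real^('n::{finite,linorder})^('n::{finite,linorder})) set"
    and Lo :: "real^('n::{finite,linorder})^('n::{finite,linorder})"
    and S :: "nat \<Rightarrow> real^('n::{finite,linorder})^('n::{finite,linorder})"
  assumes closed_SS: "closed SS"
    and unique_nearest: "\<forall>X. \<exists>!Y. Y \<in> SS \<and> (\<forall>Z\<in>SS. norm (X - Y) \<le> norm (X - Z))"
    and diagonal_Lo: "diagonal_mat Lo" and nonincr_Lo: "nonincr_diag Lo"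
    and start: "S 0 \<in> iso_set Lo"
    and step: "\<forall>k. S (Suc k) \<in> proj_M Lo (proj_set SS (S k))"
begin

abbreviation P where "P \<equiv> proj_set SS"

lemma proj_in: "P X \<in> SS"
  using proj_set_nearest[OF unique_nearest[rule_format]] by blast

lemma norm_diff_proj_eq_infdist: "norm (X - P X) = infdist X SS"
  by (rule norm_diff_proj_set_eq_infdist[OF unique_nearest[rule_format]])

lemma iterate_in_iso_set: "S k \<in> iso_set Lo"
  using start step proj_M_subset_iso_set by (cases k) blast+

lemma infdist_Suc_le: "infdist (S (Suc k)) SS \<le> norm (S (Suc k) - P (S k))"
  using infdist_le[OF proj_in] by (simp add: dist_norm)

lemma norm_Suc_diff_proj_le: "norm (S (Suc k) - P (S k)) \<le> infdist (S k) SS"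
proof -
  obtain V where V: "orthogonal_matrix V" "S k = V ** Lo ** transpose V"
    using iterate_in_iso_set[of k] unfolding iso_set_def by blast
  obtain Q L where Q: "orthogonal_matrix Q" and L: "diagonal_mat L" "nonincr_diag L"
    and "S (Suc k) = Q ** Lo ** transpose Q" and "P (S k) = Q ** L ** transpose Q"
    using step[rule_format, of k] unfolding proj_M_def by blast
  then show ?thesis
    unfolding norm_diff_proj_eq_infdist[symmetric] V(2)
    using norm_aligned_conj_diff_le[OF Q V(1) diagonal_Lo nonincr_Lo L] by simp
qed

lemma decseq_infdist: "decseq (\<lambda>k. infdist (S k) SS)"
  using infdist_Suc_le norm_Suc_diff_proj_le by (intro decseq_SucI) (meson order.trans)

lemma distances_converge:
  obtains d where "(\<lambda>k. infdist (S k) SS) \<longlonglongrightarrow> d"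
    and "(\<lambda>k. norm (S (Suc k) - P (S k))) \<longlonglongrightarrow> d"
proof -
  obtain d where d: "(\<lambda>k. infdist (S k) SS) \<longlonglongrightarrow> d"
    using decseq_convergent[OF decseq_infdist, of 0] by (auto simp: infdist_nonneg)
  moreover have "(\<lambda>k. norm (S (Suc k) - P (S k))) \<longlonglongrightarrow> d"
    by (rule tendsto_sandwich[OF always_eventually always_eventually LIMSEQ_Suc[OF d] d])
      (use infdist_Suc_le norm_Suc_diff_proj_le in auto)
  ultimately show ?thesis by (rule that)
qed

lemma norm_proj_iterate_le: "norm (P (S k)) \<le> norm Lo + infdist (S 0) SS"
proof -
  have "norm (S k) = norm Lo"
    using iterate_in_iso_set[of k] norm_orthogonal_conj unfolding iso_set_def by auto
  moreover have "norm (P (S k)) \<le> norm (S k) + infdist (S k) SS"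
    unfolding norm_diff_proj_eq_infdist[symmetric] by (metis norm_minus_commute norm_triangle_sub)
  moreover have "infdist (S k) SS \<le> infdist (S 0) SS"
    using decseq_infdist by (simp add: decseq_def)
  ultimately show ?thesis by linarith
qed

lemma eigendecomposition_sequences:
  "\<exists>Q L. \<forall>k. orthogonal_matrix (Q k) \<and> diagonal_mat (L k) \<and> nonincr_diag (L k)
      \<and> P (S k) = Q k ** L k ** transpose (Q k) \<and> S (Suc k) = Q k ** Lo ** transpose (Q k)"
proof -
  have "\<forall>k. \<exists>Q L. orthogonal_matrix Q \<and> diagonal_mat L \<and> nonincr_diag L
      \<and> P (S k) = Q ** L ** transpose Q \<and> S (Suc k) = Q ** Lo ** transpose Q"
    using step unfolding proj_M_def by blast
  then obtain Q where "\<forall>k. \<exists>L. orthogonal_matrix (Q k) \<and> diagonal_mat L \<and> nonincr_diag L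
      \<and> P (S k) = Q k ** L ** transpose (Q k) \<and> S (Suc k) = Q k ** Lo ** transpose (Q k)"
    by (rule choice[THEN exE])
  then obtain L where "\<forall>k. orthogonal_matrix (Q k) \<and> diagonal_mat (L k) \<and> nonincr_diag (L k)
      \<and> P (S k) = Q k ** L k ** transpose (Q k) \<and> S (Suc k) = Q k ** Lo ** transpose (Q k)"
    by (rule choice[THEN exE])
  then show ?thesis by blast
qed

lemma aligned_with_nearest_point_is_fixed:
  assumes Q: "orthogonal_matrix Q" and L: "diagonal_mat L \<and> nonincr_diag L"
    and "Q ** L ** transpose Q \<in> SS"
    and "norm (Q ** Lo ** transpose Q - Q ** L ** transpose Q) \<le> infdist (Q ** Lo ** transpose Q) SS"
  shows "Q ** Lo ** transpose Q \<in> proj_M Lo (P (Q ** Lo ** transpose Q))"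
proof -
  have "P (Q ** Lo ** transpose Q) = Q ** L ** transpose Q"
    using assms(3,4) by (intro proj_set_eqI[OF unique_nearest[rule_format], symmetric])
      (simp_all add: norm_diff_proj_eq_infdist)
  then show ?thesis
    unfolding proj_M_def using Q L by (intro CollectI exI[of _ Q] conjI refl exI[of _ L]) simp_all
qed

lemma fixed_limit_point:
  assumes infdist_lim: "(\<lambda>k. infdist (S k) SS) \<longlonglongrightarrow> d"
    and step_lim: "(\<lambda>k. norm (S (Suc k) - P (S k))) \<longlonglongrightarrow> d"
  obtains T r where "strict_mono r" "(S \<circ> r) \<longlonglongrightarrow> T" "T \<in> proj_M Lo (P T)" "infdist T SS = d"
proof -
  obtain Qs Ls where decomp: "\<forall>k. orthogonal_matrix (Qs k) \<and> diagonal_mat (Ls k) \<and> nonincr_diag (Ls k)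
      \<and> P (S k) = Qs k ** Ls k ** transpose (Qs k) \<and> S (Suc k) = Qs k ** Lo ** transpose (Qs k)"
    using eigendecomposition_sequences by blast
  then have Qs: "\<And>k. orthogonal_matrix (Qs k)"
    and Ls: "\<And>k. diagonal_mat (Ls k) \<and> nonincr_diag (Ls k)"
    and PS: "\<And>k. P (S k) = Qs k ** Ls k ** transpose (Qs k)"
    and S_Suc: "\<And>k. S (Suc k) = Qs k ** Lo ** transpose (Qs k)"
    by simp_all
  have bound: "norm (Ls k) \<le> norm Lo + infdist (S 0) SS" for k
    using norm_proj_iterate_le[of k] by (simp add: PS norm_orthogonal_conj[OF Qs])
  obtain r Q L where r: "strict_mono r" and Qr: "(Qs \<circ> r) \<longlonglongrightarrow> Q"
    and Lr: "(Ls \<circ> r) \<longlonglongrightarrow> L" and Q: "orthogonal_matrix Q"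
    and L: "diagonal_mat L \<and> nonincr_diag L"
    by (rule convergent_subsequence_orthogonal_diagonal[OF Qs Ls bound])
  define T where "T = Q ** Lo ** transpose Q"
  define Y where "Y = Q ** L ** transpose Q"
  have T_lim: "(\<lambda>j. S (Suc (r j))) \<longlonglongrightarrow> T" and Y_lim: "(\<lambda>j. P (S (r j))) \<longlonglongrightarrow> Y"
    using Qr Lr unfolding S_Suc PS T_def Y_def o_def by (auto intro!: tendsto_intros)
  have "Y \<in> SS"
    by (rule closed_sequentially[OF closed_SS _ Y_lim]) (simp add: proj_in)
  have r': "strict_mono (Suc \<circ> r)"
    using r by (simp add: strict_mono_Suc_iff strict_mono_def)
  have "(\<lambda>j. norm (S (Suc (r j)) - P (S (r j)))) \<longlonglongrightarrow> norm (T - Y)"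
    by (intro tendsto_intros T_lim Y_lim)
  moreover have "(\<lambda>j. norm (S (Suc (r j)) - P (S (r j)))) \<longlonglongrightarrow> d"
    using LIMSEQ_subseq_LIMSEQ[OF step_lim r] by (simp add: o_def)
  ultimately have TY: "norm (T - Y) = d"
    by (rule LIMSEQ_unique)
  have "(\<lambda>j. infdist (S (Suc (r j))) SS) \<longlonglongrightarrow> infdist T SS"
    by (intro tendsto_intros T_lim)
  moreover have "(\<lambda>j. infdist (S (Suc (r j))) SS) \<longlonglongrightarrow> d"
    using LIMSEQ_subseq_LIMSEQ[OF infdist_lim r'] by (simp add: o_def)
  ultimately have TS: "infdist T SS = d"
    by (rule LIMSEQ_unique)
  have fixed: "T \<in> proj_M Lo (P T)"
    using aligned_with_nearest_point_is_fixed[OF Q L] \<open>Y \<in> SS\<close> TY TS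
    unfolding T_def Y_def by simp
  have "(S \<circ> (Suc \<circ> r)) \<longlonglongrightarrow> T"
    using T_lim by (simp add: o_def)
  then show ?thesis by (rule that[OF r' _ fixed TS])
qed

end

theorem theorem2:
  fixes SS :: "(real^('n::{finite,linorder})^('n::{finite,linorder})) set"
    and Lo :: "real^('n::{finite,linorder})^('n::{finite,linorder})"
    and S :: "nat \<Rightarrow> real^('n::{finite,linorder})^('n::{finite,linorder})"
  assumes "closed SS"
    and "\<forall>A\<in>SS. symmetric_mat A"
    and "\<forall>X. \<exists>!Y. Y \<in> SS \<and> (\<forall>Z\<in>SS. norm (X - Y) \<le> norm (X - Z))"
    and "diagonal_mat Lo" and "nonincr_diag Lo"
    and "S 0 \<in> iso_set Lo"
    and "\<forall>k. S (Suc k) \<in> proj_M Lo (proj_set SS (S k))"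
  shows "\<exists>T. (\<exists>r. strict_mono r \<and> (S \<circ> r) \<longlonglongrightarrow> T)
           \<and> T \<in> proj_M Lo (proj_set SS T)
           \<and> (\<lambda>k. norm (S k - proj_set SS (S k))) \<longlonglongrightarrow> norm (T - proj_set SS T)
           \<and> (norm (T - proj_set SS T) = 0 \<longrightarrow> T \<in> SS \<inter> iso_set Lo)"
proof -
  interpret alternating_projections SS Lo S
    using assms(1,3-7) by unfold_locales
  obtain d where infdist_lim: "(\<lambda>k. infdist (S k) SS) \<longlonglongrightarrow> d"
    and step_lim: "(\<lambda>k. norm (S (Suc k) - P (S k))) \<longlonglongrightarrow> d"
    by (rule distances_converge)
  obtain T r where r: "strict_mono r" and lim: "(S \<circ> r) \<longlonglongrightarrow> T"
    and fixed: "T \<in> proj_M Lo (P T)" and dist_T: "infdist T SS = d"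
    by (rule fixed_limit_point[OF infdist_lim step_lim])
  have "(\<lambda>k. norm (S k - P (S k))) \<longlonglongrightarrow> norm (T - P T)"
    using infdist_lim by (simp add: norm_diff_proj_eq_infdist dist_T)
  moreover have "T \<in> SS \<inter> iso_set Lo" if "norm (T - P T) = 0"
  proof -
    have "T = P T" using that by simp
    then show ?thesis using proj_in[of T] fixed proj_M_subset_iso_set by auto
  qed
  ultimately show ?thesis using r lim fixed by blast
qed

end
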